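(* Let $X\subset U\subset\mathbb{R}^n$, where $U$ is open and $X$ is closed in $U$, and let $p\in\mathbb{N}$, $k\ge1$. For $i=0,1,\dots,k$ let $(a_{ij})_{j\ge1}$ be a sequence in $X$ and $(\xi_{ij})_{j\ge1}$ a sequence in $\mathcal{P}_p^*$ such that: (1) the sequences $(a_{ij})_j$, $i=0,\dots,k$, converge to a common point $a\in X$, and $\sum_{i=0}^k\xi_{ij}$ converges to $\xi\in\mathcal{P}_p^*$ as $j\to\infty$; (2) $|a_{ij}-a_{0j}|^{p-|\alpha|}|\xi_{ij,\alpha}(a_{ij})|\le c$ for all $i,j$ and all $|\alpha|\le p$, where $c$ is a constant. If $F=(F^\alpha)_{|\alpha|\le p}$ is a $\mathcal{C}^p$ Whitney field on $X$, then $$\xi(F,a)=\lim_{j\to\infty}\sum_{i=0}^k\xi_{ij}(F,a_{ij}).$$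
   Context: $\mathcal{P}_p$ is the space of real polynomials on $\mathbb{R}^n$ of degree $\le p$, $\mathcal{P}_p^*$ its dual; for $\xi\in\mathcal{P}_p^*$, $b\in\mathbb{R}^n$, $|\alpha|\le p$, $\xi_\alpha(b):=\xi(\tfrac1{\alpha!}(x-b)^\alpha)$. For a family $F=(F^\alpha)_{|\alpha|\le p}$ of functions $F^\alpha:X\to\mathbb{R}$ and $a\in X$, $T^p_aF(x):=\sum_{|\alpha|\le p}\frac1{\alpha!}F^\alpha(a)(x-a)^\alpha$ and $\xi(F,a):=\xi(T^p_aF)$. Set $\delta_\alpha(a,b):=\big(F^\alpha(b)-\sum_{|\beta|\le p-|\alpha|}\frac1{\beta!}F^{\alpha+\beta}(a)(b-a)^\beta\big)/|b-a|^{p-|\alpha|}$ for $a\ne b$ in $X$. $F$ is a $\mathcal{C}^p$ Whitney field on $X$ if for every $c\in X$ and every $|\alpha|\le p$, $\delta_\alpha(a,b)\to0$ as $a,b\to c$ in $X$ with $a\ne b$. *)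

theory Defs
  imports "HOL-Analysis.Analysis"
begin

definition mdeg :: "('n::finite \<Rightarrow> nat) \<Rightarrow> nat" where
  "mdeg \<alpha> = (\<Sum>i\<in>UNIV. \<alpha> i)"

definition mfact :: "('n::finite \<Rightarrow> nat) \<Rightarrow> real" where
  "mfact \<alpha> = (\<Prod>i\<in>UNIV. fact (\<alpha> i))"

definition mpow :: "real^'n::finite \<Rightarrow> ('n \<Rightarrow> nat) \<Rightarrow> real" where
  "mpow x \<alpha> = (\<Prod>i\<in>UNIV. (x $ i) ^ (\<alpha> i))"

definition midx :: "nat \<Rightarrow> ('n::finite \<Rightarrow> nat) set" where
  "midx p = {\<alpha>. mdeg \<alpha> \<le> p}"

definition Poly_le :: "nat \<Rightarrow> (real^'n::finite \<Rightarrow> real) set" where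
  "Poly_le p = {f. \<exists>c::('n \<Rightarrow> nat) \<Rightarrow> real.
      f = (\<lambda>x. \<Sum>\<alpha>\<in>midx p. c \<alpha> * mpow x \<alpha>)}"

definition in_dual :: "nat \<Rightarrow> ((real^'n::finite \<Rightarrow> real) \<Rightarrow> real) \<Rightarrow> bool" where
  "in_dual p \<xi> \<longleftrightarrow>
     (\<forall>P\<in>Poly_le p. \<forall>Q\<in>Poly_le p. \<xi> (\<lambda>x. P x + Q x) = \<xi> P + \<xi> Q) \<and>
     (\<forall>P\<in>Poly_le p. \<forall>r. \<xi> (\<lambda>x. r * P x) = r * \<xi> P)"

text \<open>Convergence in the (finite-dimensional) space P_p^*.\<close>

definition dual_tendsto :: "nat \<Rightarrow> (nat \<Rightarrow> (real^'n::finite \<Rightarrow> real) \<Rightarrow> real)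
    \<Rightarrow> ((real^'n \<Rightarrow> real) \<Rightarrow> real) \<Rightarrow> bool" where
  "dual_tendsto p s \<xi> \<longleftrightarrow> (\<forall>P\<in>Poly_le p. (\<lambda>j. s j P) \<longlonglongrightarrow> \<xi> P)"

definition dual_coord :: "((real^'n::finite \<Rightarrow> real) \<Rightarrow> real) \<Rightarrow> ('n \<Rightarrow> nat) \<Rightarrow> real^'n \<Rightarrow> real" where
  "dual_coord \<xi> \<alpha> b = \<xi> (\<lambda>x. mpow (x - b) \<alpha> / mfact \<alpha>)"

definition taylor :: "nat \<Rightarrow> (('n::finite \<Rightarrow> nat) \<Rightarrow> real^'n \<Rightarrow> real) \<Rightarrow> real^'n \<Rightarrow> real^'n \<Rightarrow> real" where
  "taylor p F a = (\<lambda>x. \<Sum>\<alpha>\<in>midx p. F \<alpha> a / mfact \<alpha> * mpow (x - a) \<alpha>)"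

definition whitney_delta :: "nat \<Rightarrow> (('n::finite \<Rightarrow> nat) \<Rightarrow> real^'n \<Rightarrow> real) \<Rightarrow> ('n \<Rightarrow> nat)
    \<Rightarrow> real^'n \<Rightarrow> real^'n \<Rightarrow> real" where
  "whitney_delta p F \<alpha> a b =
     (F \<alpha> b - (\<Sum>\<beta>\<in>midx (p - mdeg \<alpha>). F (\<lambda>i. \<alpha> i + \<beta> i) a / mfact \<beta> * mpow (b - a) \<beta>))
     / norm (b - a) ^ (p - mdeg \<alpha>)"

definition whitney_field :: "nat \<Rightarrow> (real^'n::finite) set \<Rightarrow> (('n \<Rightarrow> nat) \<Rightarrow> real^'n \<Rightarrow> real) \<Rightarrow> bool" where
  "whitney_field p X F \<longleftrightarrow>
     (\<forall>c\<in>X. \<forall>\<alpha>\<in>midx p. \<forall>e>0. \<exists>d>0. \<forall>a\<in>X. \<forall>b\<in>X.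
        a \<noteq> b \<and> dist a c < d \<and> dist b c < d \<longrightarrow> \<bar>whitney_delta p F \<alpha> a b\<bar> < e)"

end

theory Submission
  imports Defs
begin

(* Re-expanding the Taylor polynomial T^p_u F about another point b gives
   xi(T^p_u F) = sum_alpha d^alpha T^p_u F(b) xi_alpha(b) for every xi in P_p^*.  With u = a_0j this
   splits xi_ij(F, a_ij) into sum_alpha d^alpha T^p_u F(a) xi_ij,alpha(a) plus the remainder
   sum_alpha delta_alpha(a_0j, a_ij) |a_ij - a_0j|^(p - |alpha|) xi_ij,alpha(a_ij).
   Summed over i, the first part tends to sum_alpha F^alpha(a) xi_alpha(a) = xi(F, a), because
   d^alpha T^p_(a_0j) F(a) -> F^alpha(a) by the Whitney condition and sum_i xi_ij -> xi.  In the
   remainder delta_alpha -> 0 by the Whitney condition, while hypothesis (2) bounds the other factor.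
   Neither U nor the assumption k >= 1 plays any role. *)

lemma finite_midx: "finite (midx p :: ('n::finite \<Rightarrow> nat) set)"
proof (rule finite_subset)
  show "midx p \<subseteq> PiE (UNIV::'n set) (\<lambda>_. {..p})"
  proof
    fix \<alpha> :: "'n \<Rightarrow> nat"
    assume "\<alpha> \<in> midx p"
    then have "\<alpha> i \<le> p" for i
      using member_le_sum[of i UNIV \<alpha>] unfolding midx_def mdeg_def by auto
    then show "\<alpha> \<in> PiE UNIV (\<lambda>_. {..p})"
      by (auto simp: PiE_UNIV_domain)
  qed
qed (simp add: finite_PiE)

lemma atMost_fun_eq_PiE: "{..\<gamma>} = PiE UNIV (\<lambda>i. {..\<gamma> i})"
  by (auto simp: PiE_iff le_fun_def)

lemma finite_atMost_multiindex: "finite {..\<gamma>::'n::finite \<Rightarrow> nat}"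
  by (simp add: atMost_fun_eq_PiE finite_PiE)

lemma mdeg_add: "mdeg (\<lambda>i. \<alpha> i + \<beta> i) = mdeg \<alpha> + mdeg \<beta>"
  unfolding mdeg_def by (simp add: sum.distrib)

lemma mdeg_mono: "\<alpha> \<le> \<gamma> \<Longrightarrow> mdeg \<alpha> \<le> mdeg \<gamma>"
  unfolding mdeg_def le_fun_def by (rule sum_mono) auto

lemma mdeg_diff: "\<alpha> \<le> \<gamma> \<Longrightarrow> mdeg (\<lambda>i. \<gamma> i - \<alpha> i) = mdeg \<gamma> - mdeg \<alpha>"
  using mdeg_add[of \<alpha> "\<lambda>i. \<gamma> i - \<alpha> i"] by (simp add: le_fun_def)

lemma add_power_div_fact:
  "((x::real) + y) ^ n / fact n = (\<Sum>m\<le>n. x ^ m / fact m * (y ^ (n - m) / fact (n - m)))"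
proof -
  have "(x + y) ^ n / fact n = (\<Sum>m\<le>n. of_nat (n choose m) * x ^ m * y ^ (n - m) / fact n)"
    by (simp add: binomial_ring sum_divide_distrib)
  also have "\<dots> = (\<Sum>m\<le>n. x ^ m / fact m * (y ^ (n - m) / fact (n - m)))"
  proof (rule sum.cong)
    fix m
    assume "m \<in> {..n}"
    then have "of_nat (n choose m) = (fact n / (fact m * fact (n - m)) :: real)"
      by (simp add: binomial_fact)
    then show "of_nat (n choose m) * x ^ m * y ^ (n - m) / fact n
        = x ^ m / fact m * (y ^ (n - m) / fact (n - m))"
      by simp
  qed simp
  finally show ?thesis .
qed

lemma mpow_add_div_mfact:
  "mpow (u + v) \<gamma> / mfact \<gamma> =
     (\<Sum>\<alpha>\<in>{..\<gamma>}. mpow u \<alpha> / mfact \<alpha> * (mpow v (\<lambda>i. \<gamma> i - \<alpha> i) / mfact (\<lambda>i. \<gamma> i - \<alpha> i)))"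
proof -
  have "mpow (u + v) \<gamma> / mfact \<gamma> = (\<Prod>i\<in>UNIV. (u$i + v$i) ^ \<gamma> i / fact (\<gamma> i))"
    unfolding mpow_def mfact_def by (simp add: prod_dividef)
  also have "\<dots> = (\<Prod>i\<in>UNIV. \<Sum>m\<le>\<gamma> i. u$i ^ m / fact m * (v$i ^ (\<gamma> i - m) / fact (\<gamma> i - m)))"
    by (simp add: add_power_div_fact)
  also have "\<dots> = (\<Sum>\<alpha>\<in>PiE UNIV (\<lambda>i. {..\<gamma> i}).
      \<Prod>i\<in>UNIV. u$i ^ \<alpha> i / fact (\<alpha> i) * (v$i ^ (\<gamma> i - \<alpha> i) / fact (\<gamma> i - \<alpha> i)))"
    by (rule prod_sum_PiE) auto
  finally show ?thesis
    unfolding atMost_fun_eq_PiE mpow_def mfact_def by (simp add: prod_dividef prod.distrib)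
qed

lemma mpow_zero: "mpow 0 \<beta> = (if \<beta> = (\<lambda>_. 0) then 1 else 0)"
proof (cases "\<beta> = (\<lambda>_. 0)")
  case False
  then obtain i where "\<beta> i \<noteq> 0" by auto
  then have "(\<Prod>i\<in>UNIV. (0::real) ^ \<beta> i) = 0" by (intro prod_zero) auto
  with False show ?thesis by (simp add: mpow_def)
qed (simp add: mpow_def)

definition taylor_deriv ::
    "nat \<Rightarrow> (('n::finite \<Rightarrow> nat) \<Rightarrow> real^'n \<Rightarrow> real) \<Rightarrow> ('n \<Rightarrow> nat) \<Rightarrow> real^'n \<Rightarrow> real^'n \<Rightarrow> real" where
  "taylor_deriv p F \<alpha> u b = (\<Sum>\<beta>\<in>midx (p - mdeg \<alpha>). F (\<lambda>i. \<alpha> i + \<beta> i) u / mfact \<beta> * mpow (b - u) \<beta>)"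

lemma taylor_deriv_self: "taylor_deriv p F \<alpha> b b = F \<alpha> b"
proof -
  have "taylor_deriv p F \<alpha> b b =
      (\<Sum>\<beta>\<in>midx (p - mdeg \<alpha>). if \<beta> = (\<lambda>_. 0) then F (\<lambda>i. \<alpha> i + \<beta> i) b / mfact \<beta> else 0)"
    unfolding taylor_deriv_def by (intro sum.cong) (auto simp: mpow_zero)
  also have "\<dots> = F \<alpha> b"
  proof -
    have zero: "(\<lambda>_. 0) \<in> midx (p - mdeg \<alpha>)"
      by (simp add: midx_def mdeg_def)
    show ?thesis
      by (simp only: sum.delta[OF finite_midx] zero if_True) (simp add: mfact_def)
  qed
  finally show ?thesis .
qed

lemma taylor_recenter: "taylor p F u = taylor p (\<lambda>\<alpha> _. taylor_deriv p F \<alpha> u b) b"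
proof
  fix x
  define T where "T \<gamma> \<alpha> = F \<gamma> u * (mpow (x - b) \<alpha> / mfact \<alpha>
      * (mpow (b - u) (\<lambda>i. \<gamma> i - \<alpha> i) / mfact (\<lambda>i. \<gamma> i - \<alpha> i)))" for \<gamma> \<alpha>
  have "taylor p F u x = (\<Sum>\<gamma>\<in>midx p. F \<gamma> u * (mpow ((x - b) + (b - u)) \<gamma> / mfact \<gamma>))"
    by (simp add: taylor_def)
  also have "\<dots> = (\<Sum>\<gamma>\<in>midx p. \<Sum>\<alpha>\<in>{..\<gamma>}. T \<gamma> \<alpha>)"
    unfolding mpow_add_div_mfact by (simp add: T_def sum_distrib_left)
  also have "\<dots> = (\<Sum>(\<gamma>, \<alpha>)\<in>Sigma (midx p) atMost. T \<gamma> \<alpha>)"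
    by (rule sum.Sigma) (auto simp: finite_midx finite_atMost_multiindex)
  also have "\<dots> = (\<Sum>(\<alpha>, \<beta>)\<in>Sigma (midx p) (\<lambda>\<alpha>. midx (p - mdeg \<alpha>)). T (\<lambda>i. \<alpha> i + \<beta> i) \<alpha>)"
    by (rule sum.reindex_bij_witness[where i = "\<lambda>(\<alpha>, \<beta>). (\<lambda>i. \<alpha> i + \<beta> i, \<alpha>)"
          and j = "\<lambda>(\<gamma>, \<alpha>). (\<alpha>, \<lambda>i. \<gamma> i - \<alpha> i)"])
      (auto simp: midx_def mdeg_add mdeg_diff le_fun_def intro: order_trans[OF mdeg_mono])
  also have "\<dots> = (\<Sum>\<alpha>\<in>midx p. \<Sum>\<beta>\<in>midx (p - mdeg \<alpha>). T (\<lambda>i. \<alpha> i + \<beta> i) \<alpha>)"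
    by (rule sum.Sigma[symmetric]) (auto simp: finite_midx)
  also have "\<dots> = taylor p (\<lambda>\<alpha> _. taylor_deriv p F \<alpha> u b) b x"
    by (simp add: taylor_def taylor_deriv_def T_def sum_distrib_left sum_divide_distrib mult_ac)
  finally show "taylor p F u x = taylor p (\<lambda>\<alpha> _. taylor_deriv p F \<alpha> u b) b x" .
qed

lemma Poly_le_sum:
  assumes "\<forall>s\<in>S. P s \<in> Poly_le p"
  shows "(\<lambda>x. \<Sum>s\<in>S. r s * P s x) \<in> Poly_le p"
proof -
  have "\<forall>s\<in>S. \<exists>c. P s = (\<lambda>x. \<Sum>\<alpha>\<in>midx p. c \<alpha> * mpow x \<alpha>)"
    using assms by (simp add: Poly_le_def)
  then obtain C where "\<forall>s\<in>S. P s = (\<lambda>x. \<Sum>\<alpha>\<in>midx p. C s \<alpha> * mpow x \<alpha>)"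
    by (rule bchoice[THEN exE])
  then show ?thesis
    unfolding Poly_le_def
    by (intro CollectI exI[of _ "\<lambda>\<alpha>. \<Sum>s\<in>S. r s * C s \<alpha>"])
      (simp add: sum_distrib_left sum_distrib_right mult.assoc sum.swap[of _ S])
qed

lemma in_dual_sum:
  assumes "in_dual p \<xi>" and "finite S" and "\<forall>s\<in>S. P s \<in> Poly_le p"
  shows "\<xi> (\<lambda>x. \<Sum>s\<in>S. r s * P s x) = (\<Sum>s\<in>S. r s * \<xi> (P s))"
  using assms(2,3)
proof (induction S rule: finite_induct)
  case empty
  have "(\<lambda>x. 0) \<in> Poly_le p"
    using Poly_le_sum[of "{}"] by simp
  moreover have "\<xi> (\<lambda>x. r * P x) = r * \<xi> P" if "P \<in> Poly_le p" for r P
    using assms(1) that unfolding in_dual_def by blast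
  ultimately have "\<xi> (\<lambda>x. 0 * 0) = 0 * \<xi> (\<lambda>x. 0)"
    by blast
  then show ?case
    by simp
next
  case (insert s S)
  then have "(\<lambda>x. r s * P s x) \<in> Poly_le p" and "(\<lambda>x. \<Sum>s\<in>S. r s * P s x) \<in> Poly_le p"
    using Poly_le_sum[of "{s}"] Poly_le_sum[of S] by auto
  with assms(1) have "\<xi> (\<lambda>x. r s * P s x + (\<Sum>s\<in>S. r s * P s x))
      = r s * \<xi> (P s) + \<xi> (\<lambda>x. \<Sum>s\<in>S. r s * P s x)"
    using insert.prems unfolding in_dual_def by simp
  with insert show ?case
    by simp
qed

lemma taylor_in_Poly_le: "taylor p F b \<in> Poly_le p"
  unfolding Poly_le_def
  by (subst taylor_recenter[where b = 0])
    (auto simp: taylor_def intro: exI[of _ "\<lambda>\<alpha>. taylor_deriv p F \<alpha> b 0 / mfact \<alpha>"])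

lemma shifted_monomial_in_Poly_le:
  assumes "\<alpha> \<in> midx p"
  shows "(\<lambda>x. mpow (x - b) \<alpha> / mfact \<alpha>) \<in> Poly_le p"
proof -
  have "taylor p (\<lambda>\<gamma> _. if \<gamma> = \<alpha> then 1 else 0) b x =
      (\<Sum>\<gamma>\<in>midx p. if \<gamma> = \<alpha> then mpow (x - b) \<gamma> / mfact \<gamma> else 0)" for x
    by (auto simp: taylor_def intro!: sum.cong)
  with assms have "mpow (x - b) \<alpha> / mfact \<alpha> = taylor p (\<lambda>\<gamma> _. if \<gamma> = \<alpha> then 1 else 0) b x" for x
    by (simp add: sum.delta[OF finite_midx])
  then have "(\<lambda>x. mpow (x - b) \<alpha> / mfact \<alpha>) = taylor p (\<lambda>\<gamma> _. if \<gamma> = \<alpha> then 1 else 0) b" ..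
  then show ?thesis
    using taylor_in_Poly_le by simp
qed

lemma dual_taylor_center:
  assumes "in_dual p \<xi>"
  shows "\<xi> (taylor p F b) = (\<Sum>\<alpha>\<in>midx p. F \<alpha> b * dual_coord \<xi> \<alpha> b)"
proof -
  have "\<xi> (taylor p F b) = \<xi> (\<lambda>x. \<Sum>\<alpha>\<in>midx p. F \<alpha> b * (mpow (x - b) \<alpha> / mfact \<alpha>))"
    by (simp add: taylor_def)
  also have "\<dots> = (\<Sum>\<alpha>\<in>midx p. F \<alpha> b * \<xi> (\<lambda>x. mpow (x - b) \<alpha> / mfact \<alpha>))"
    by (rule in_dual_sum[OF assms finite_midx]) (simp add: shifted_monomial_in_Poly_le)
  finally show ?thesis
    by (simp add: dual_coord_def)
qed

lemma dual_taylor: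
  "in_dual p \<xi> \<Longrightarrow> \<xi> (taylor p F u) = (\<Sum>\<alpha>\<in>midx p. taylor_deriv p F \<alpha> u b * dual_coord \<xi> \<alpha> b)"
  by (subst taylor_recenter[where b = b]) (rule dual_taylor_center)

lemma dual_tendsto_dual_coord:
  assumes "dual_tendsto p s \<xi>" and "\<alpha> \<in> midx p"
  shows "(\<lambda>j. dual_coord (s j) \<alpha> b) \<longlonglongrightarrow> dual_coord \<xi> \<alpha> b"
  using assms(1) shifted_monomial_in_Poly_le[OF assms(2)]
  unfolding dual_tendsto_def dual_coord_def by simp

lemma tendsto_mult_zero_Bfun:
  fixes f g :: "'a \<Rightarrow> 'b::real_normed_algebra"
  assumes "(f \<longlongrightarrow> 0) G" and "Bfun g G"
  shows "((\<lambda>x. f x * g x) \<longlongrightarrow> 0) G"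
  using bounded_bilinear.Zfun_prod_Bfun[OF bounded_bilinear_mult] assms
  by (simp add: tendsto_Zfun_iff)

lemma whitney_delta_self: "whitney_delta p F \<alpha> b b = 0"
  using taylor_deriv_self[of p F \<alpha> b] by (simp add: whitney_delta_def taylor_deriv_def)

lemma taylor_deriv_remainder:
  "F \<alpha> b - taylor_deriv p F \<alpha> a b = whitney_delta p F \<alpha> a b * norm (b - a) ^ (p - mdeg \<alpha>)"
proof (cases "a = b")
  case True
  then show ?thesis by (simp add: taylor_deriv_self whitney_delta_self)
next
  case False
  then show ?thesis by (simp add: whitney_delta_def taylor_deriv_def)
qed

lemma whitney_delta_tendsto_zero:
  assumes "whitney_field p X F" and "a \<in> X" and "\<alpha> \<in> midx p"
    and "(u \<longlongrightarrow> a) G" and "(v \<longlongrightarrow> a) G" and "eventually (\<lambda>j. u j \<in> X \<and> v j \<in> X) G"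
  shows "((\<lambda>j. whitney_delta p F \<alpha> (u j) (v j)) \<longlongrightarrow> 0) G"
proof (rule tendstoI)
  fix e :: real
  assume "e > 0"
  then obtain d where "d > 0" and d: "\<And>x y. x \<in> X \<Longrightarrow> y \<in> X \<Longrightarrow> x \<noteq> y \<Longrightarrow> dist x a < d \<Longrightarrow> dist y a < d
      \<Longrightarrow> \<bar>whitney_delta p F \<alpha> x y\<bar> < e"
    using assms(1-3) unfolding whitney_field_def by metis
  have "eventually (\<lambda>j. dist (u j) a < d \<and> dist (v j) a < d \<and> u j \<in> X \<and> v j \<in> X) G"
    using tendstoD[OF assms(4) \<open>d > 0\<close>] tendstoD[OF assms(5) \<open>d > 0\<close>] assms(6)
    by eventually_elim blast
  then show "eventually (\<lambda>j. dist (whitney_delta p F \<alpha> (u j) (v j)) 0 < e) G"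
  proof eventually_elim
    case (elim j)
    show ?case
    proof (cases "u j = v j")
      case True
      with \<open>e > 0\<close> show ?thesis by (simp add: whitney_delta_self)
    next
      case False
      with elim d show ?thesis by (simp add: dist_real_def)
    qed
  qed
qed

lemma taylor_deriv_tendsto:
  assumes "whitney_field p X F" and "a \<in> X" and "\<alpha> \<in> midx p"
    and "(u \<longlongrightarrow> a) G" and "eventually (\<lambda>j. u j \<in> X) G"
  shows "((\<lambda>j. taylor_deriv p F \<alpha> (u j) a) \<longlongrightarrow> F \<alpha> a) G"
proof -
  have "((\<lambda>j. whitney_delta p F \<alpha> (u j) a * norm (a - u j) ^ (p - mdeg \<alpha>))
      \<longlongrightarrow> 0 * norm (a - a) ^ (p - mdeg \<alpha>)) G"
    using assms by (intro tendsto_intros whitney_delta_tendsto_zero[where X = X]) auto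
  then have "((\<lambda>j. F \<alpha> a - taylor_deriv p F \<alpha> (u j) a) \<longlongrightarrow> 0) G"
    by (simp add: taylor_deriv_remainder)
  from tendsto_diff[OF tendsto_const[of "F \<alpha> a"] this] show ?thesis
    by simp
qed

lemma whitney_remainder_tendsto_zero:
  assumes "whitney_field p X F" and "a \<in> X" and "\<alpha> \<in> midx p"
    and "(u \<longlongrightarrow> a) G" and "(v \<longlongrightarrow> a) G" and "eventually (\<lambda>j. u j \<in> X \<and> v j \<in> X) G"
    and "eventually (\<lambda>j. norm (v j - u j) ^ (p - mdeg \<alpha>) * \<bar>d j\<bar> \<le> c) G"
  shows "((\<lambda>j. whitney_delta p F \<alpha> (u j) (v j) * (norm (v j - u j) ^ (p - mdeg \<alpha>) * d j)) \<longlongrightarrow> 0) G"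
proof (rule tendsto_mult_zero_Bfun)
  show "((\<lambda>j. whitney_delta p F \<alpha> (u j) (v j)) \<longlongrightarrow> 0) G"
    using assms(1-6) by (rule whitney_delta_tendsto_zero)
  show "Bfun (\<lambda>j. norm (v j - u j) ^ (p - mdeg \<alpha>) * d j) G"
    using assms(7) by (intro BfunI[where K = c]) (simp add: abs_mult)
qed

lemma dual_taylor_decomposition:
  assumes "in_dual p \<eta>"
  shows "\<eta> (taylor p F b) = (\<Sum>\<alpha>\<in>midx p. taylor_deriv p F \<alpha> u a * dual_coord \<eta> \<alpha> a)
    + (\<Sum>\<alpha>\<in>midx p. whitney_delta p F \<alpha> u b * (norm (b - u) ^ (p - mdeg \<alpha>) * dual_coord \<eta> \<alpha> b))"
proof -
  have "\<eta> (taylor p F b) - \<eta> (taylor p F u)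
      = (\<Sum>\<alpha>\<in>midx p. (F \<alpha> b - taylor_deriv p F \<alpha> u b) * dual_coord \<eta> \<alpha> b)"
    using dual_taylor_center[OF assms] dual_taylor[OF assms, of F u b]
    by (simp add: sum_subtractf left_diff_distrib)
  then show ?thesis
    using dual_taylor[OF assms, of F u a] by (simp add: taylor_deriv_remainder mult.assoc)
qed

lemma sum_dual_taylor_decomposition:
  assumes "\<forall>i\<in>I. in_dual p (\<eta> i)"
  shows "(\<Sum>i\<in>I. \<eta> i (taylor p F (b i)))
    = (\<Sum>\<alpha>\<in>midx p. taylor_deriv p F \<alpha> u a * (\<Sum>i\<in>I. dual_coord (\<eta> i) \<alpha> a))
      + (\<Sum>i\<in>I. \<Sum>\<alpha>\<in>midx p. whitney_delta p F \<alpha> u (b i)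
          * (norm (b i - u) ^ (p - mdeg \<alpha>) * dual_coord (\<eta> i) \<alpha> (b i)))"
  using assms
  by (simp add: dual_taylor_decomposition[where u = u and a = a] sum.distrib sum_distrib_left
      sum.swap[of _ I])

theorem lemma4p8:
  fixes U X :: "(real^'n::finite) set"
    and p k :: nat
    and as :: "nat \<Rightarrow> nat \<Rightarrow> real^'n"
    and \<xi>s :: "nat \<Rightarrow> nat \<Rightarrow> (real^'n \<Rightarrow> real) \<Rightarrow> real"
    and a :: "real^'n" and \<xi> :: "(real^'n \<Rightarrow> real) \<Rightarrow> real" and c :: real
    and F :: "('n \<Rightarrow> nat) \<Rightarrow> real^'n \<Rightarrow> real"
  assumes "open U" and "X \<subseteq> U" and "closedin (top_of_set U) X"
    and "k \<ge> 1"
    and "\<forall>i\<le>k. \<forall>j. as i j \<in> X"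
    and "\<forall>i\<le>k. \<forall>j. in_dual p (\<xi>s i j)"
    and "in_dual p \<xi>"
    and "a \<in> X"
    and "\<forall>i\<le>k. (\<lambda>j. as i j) \<longlonglongrightarrow> a"
    and "dual_tendsto p (\<lambda>j P. \<Sum>i\<le>k. \<xi>s i j P) \<xi>"
    and "\<forall>i\<le>k. \<forall>j. \<forall>\<alpha>\<in>midx p.
           norm (as i j - as 0 j) ^ (p - mdeg \<alpha>) * \<bar>dual_coord (\<xi>s i j) \<alpha> (as i j)\<bar> \<le> c"
    and "whitney_field p X F"
  shows "(\<lambda>j. \<Sum>i\<le>k. \<xi>s i j (taylor p F (as i j))) \<longlonglongrightarrow> \<xi> (taylor p F a)"
proof -
  have principal: "(\<lambda>j. \<Sum>\<alpha>\<in>midx p.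
      taylor_deriv p F \<alpha> (as 0 j) a * (\<Sum>i\<le>k. dual_coord (\<xi>s i j) \<alpha> a)) \<longlonglongrightarrow> (\<Sum>\<alpha>\<in>midx p. F \<alpha> a * dual_coord \<xi> \<alpha> a)"
    using dual_tendsto_dual_coord[OF assms(10)] assms(5,8,9,12)
    by (intro tendsto_sum tendsto_mult taylor_deriv_tendsto[where X = X])
      (auto simp: dual_coord_def)
  have remainder: "(\<lambda>j. \<Sum>i\<le>k. \<Sum>\<alpha>\<in>midx p. whitney_delta p F \<alpha> (as 0 j) (as i j)
      * (norm (as i j - as 0 j) ^ (p - mdeg \<alpha>) * dual_coord (\<xi>s i j) \<alpha> (as i j))) \<longlonglongrightarrow> 0"
    using assms(5,8,9,11,12)
    by (intro tendsto_null_sum whitney_remainder_tendsto_zero[where X = X and c = c]) auto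
  have "(\<Sum>i\<le>k. \<xi>s i j (taylor p F (as i j)))
      = (\<Sum>\<alpha>\<in>midx p. taylor_deriv p F \<alpha> (as 0 j) a * (\<Sum>i\<le>k. dual_coord (\<xi>s i j) \<alpha> a))
        + (\<Sum>i\<le>k. \<Sum>\<alpha>\<in>midx p. whitney_delta p F \<alpha> (as 0 j) (as i j)
            * (norm (as i j - as 0 j) ^ (p - mdeg \<alpha>) * dual_coord (\<xi>s i j) \<alpha> (as i j)))" for j
    using assms(6) by (intro sum_dual_taylor_decomposition) auto
  with tendsto_add[OF principal remainder] show ?thesis
    by (simp add: dual_taylor_center[OF assms(7)])
qed

end
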